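(* Let $N$ be a positive integer and $\epsilon_s>0$, and let $\mathcal A=\{x_1,\dots,x_N\}$ be $N$ real data points in a bounded interval $[x_L,x_U]$. Let $N_c^{med}$ be the size of the smaller of the two blocks $\mathcal A\cap[x_L,r)$, $\mathcal A\cap[r,x_U]$ when the split point $r$ is drawn from the density on $[x_L,x_U]$ proportional to $\exp\{\epsilon_s q(r)/2\}$ with $q(r)=-\big|\,|\mathcal A\cap[x_L,r)|-|\mathcal A\cap[r,x_U]|\,\big|$ (the differentially private median split), and let $N_c^{rand}$ be the corresponding size when the split point $r$ is drawn uniformly at random from $[x_L,x_U]$. Then for any $0<t<N/2$, $$\Pr(N_c^{med}\le t)\le\Pr(N_c^{rand}\le t).$$
   Context: The density proportional to $\exp\{\epsilon_s q(r)/2\}$ is taken with respect to Lebesgue measure on $[x_L,x_U]$; this is the exponential mechanism giving an $\epsilon_s$-differentially private median split. *)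

theory Defs
  imports "HOL-Probability.Probability"
begin

text \<open>Data set A = {x_0,...,x_(N-1)} (points counted with multiplicity), given as
  x :: nat => real restricted to indices i < N.\<close>

definition left_count :: "(nat \<Rightarrow> real) \<Rightarrow> nat \<Rightarrow> real \<Rightarrow> real \<Rightarrow> nat" where
  "left_count x N xL r = card {i. i < N \<and> xL \<le> x i \<and> x i < r}"

definition right_count :: "(nat \<Rightarrow> real) \<Rightarrow> nat \<Rightarrow> real \<Rightarrow> real \<Rightarrow> nat" where
  "right_count x N xU r = card {i. i < N \<and> r \<le> x i \<and> x i \<le> xU}"

definition split_utility :: "(nat \<Rightarrow> real) \<Rightarrow> nat \<Rightarrow> real \<Rightarrow> real \<Rightarrow> real \<Rightarrow> real" where
  "split_utility x N xL xU r =
     - \<bar>real (left_count x N xL r) - real (right_count x N xU r)\<bar>"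

definition smaller_block :: "(nat \<Rightarrow> real) \<Rightarrow> nat \<Rightarrow> real \<Rightarrow> real \<Rightarrow> real \<Rightarrow> nat" where
  "smaller_block x N xL xU r = min (left_count x N xL r) (right_count x N xU r)"

definition med_weight :: "real \<Rightarrow> (nat \<Rightarrow> real) \<Rightarrow> nat \<Rightarrow> real \<Rightarrow> real \<Rightarrow> real \<Rightarrow> real" where
  "med_weight eps x N xL xU r = exp (eps * split_utility x N xL xU r / 2)"

definition dp_median_split :: "real \<Rightarrow> (nat \<Rightarrow> real) \<Rightarrow> nat \<Rightarrow> real \<Rightarrow> real \<Rightarrow> real measure" where
  "dp_median_split eps x N xL xU =
     density lborel (\<lambda>r. ennreal (indicator {xL..xU} r * med_weight eps x N xL xU r
        / (LINT s:{xL..xU}|lborel. med_weight eps x N xL xU s)))"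

definition random_split :: "real \<Rightarrow> real \<Rightarrow> real measure" where
  "random_split xL xU = uniform_measure lborel {xL..xU}"

end

theory Submission
  imports Defs
begin

text \<open>Since the two blocks always hold N points together, the utility equals 2 m(r) - N, where
  m(r) is the size of the smaller block. The weight of the exponential mechanism is therefore a
  nondecreasing function of m(r): it is at most its value c at m = t on the event m(r) \<le> t and at
  least c off it. A normalised density that is at most c on an event and at least c on its
  complement assigns the event at most its Lebesgue proportion of [xL, xU], which is its
  probability under the uniform split.\<close>

lemma real_card_less_eq_sum_of_bool:
  fixes N :: nat
  shows "real (card {i. i < N \<and> P i}) = (\<Sum>i<N. of_bool (P i))"
proof -
  have "(\<Sum>i<N. of_bool (P i)) = real (card ({..<N} \<inter> {i. P i}))"
    by (rule sum_of_bool_eq) simp_all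
  also have "{..<N} \<inter> {i. P i} = {i. i < N \<and> P i}"
    by auto
  finally show ?thesis ..
qed

lemma left_count_eq_sum:
  "real (left_count x N xL r) = (\<Sum>i<N. of_bool (xL \<le> x i) * of_bool (x i < r))"
  unfolding left_count_def real_card_less_eq_sum_of_bool by (intro sum.cong) auto

lemma right_count_eq_sum:
  "real (right_count x N xU r) = (\<Sum>i<N. of_bool (x i \<le> xU) * of_bool (r \<le> x i))"
  unfolding right_count_def real_card_less_eq_sum_of_bool by (intro sum.cong) auto

lemma borel_measurable_left_count [measurable]:
  "(\<lambda>r. real (left_count x N xL r)) \<in> borel_measurable borel"
  unfolding left_count_eq_sum by measurable

lemma borel_measurable_right_count [measurable]:
  "(\<lambda>r. real (right_count x N xU r)) \<in> borel_measurable borel"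
  unfolding right_count_eq_sum by measurable

lemma borel_measurable_smaller_block [measurable]:
  "(\<lambda>r. real (smaller_block x N xL xU r)) \<in> borel_measurable borel"
  unfolding smaller_block_def of_nat_min by measurable

lemma borel_measurable_med_weight [measurable]:
  "med_weight eps x N xL xU \<in> borel_measurable borel"
  unfolding med_weight_def[abs_def] split_utility_def by measurable

lemma left_count_add_right_count:
  assumes "\<And>i. i < N \<Longrightarrow> x i \<in> {xL..xU}"
  shows "left_count x N xL r + right_count x N xU r = N"
proof -
  have "real (left_count x N xL r) + real (right_count x N xU r)
      = (\<Sum>i<N. of_bool (xL \<le> x i) * of_bool (x i < r) + of_bool (x i \<le> xU) * of_bool (r \<le> x i))"
    unfolding left_count_eq_sum right_count_eq_sum sum.distrib by simp
  also have "\<dots> = (\<Sum>i<N. 1)"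
    using assms by (intro sum.cong) auto
  finally have "real (left_count x N xL r + right_count x N xU r) = real N"
    by simp
  then show ?thesis
    by (simp only: of_nat_eq_iff)
qed

lemma med_weight_eq_smaller_block:
  assumes "\<And>i. i < N \<Longrightarrow> x i \<in> {xL..xU}"
  shows "med_weight eps x N xL xU r = exp (eps * (2 * real (smaller_block x N xL xU r) - real N) / 2)"
proof -
  have "real (left_count x N xL r) + real (right_count x N xU r) = real N"
    by (simp flip: of_nat_add add: left_count_add_right_count[OF assms])
  then have "split_utility x N xL xU r = 2 * real (smaller_block x N xL xU r) - real N"
    unfolding split_utility_def smaller_block_def of_nat_min by (auto simp: abs_if min_def)
  then show ?thesis
    unfolding med_weight_def by simp
qed

lemma med_weight_le_1:
  assumes "0 \<le> eps"
  shows "med_weight eps x N xL xU r \<le> 1"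
  using assms unfolding med_weight_def split_utility_def by simp

lemma set_integrable_med_weight:
  assumes "0 \<le> eps"
  shows "set_integrable lborel {xL..xU} (med_weight eps x N xL xU)"
  unfolding set_integrable_def
proof (rule integrableI_bounded_set_indicator[where B = 1])
  show "AE r in lborel. r \<in> {xL..xU} \<longrightarrow> norm (med_weight eps x N xL xU r) \<le> 1"
    using med_weight_le_1[OF assms] by (simp add: med_weight_def)
qed (simp_all add: emeasure_lborel_Icc_eq)

lemma measure_normalized_density:
  fixes w :: "'a \<Rightarrow> real"
  assumes I: "I \<in> sets M" and S: "S \<in> sets M"
    and w: "set_integrable M I w" "\<And>r. r \<in> I \<Longrightarrow> 0 \<le> w r"
  shows "measure (density M (\<lambda>r. ennreal (indicator I r * w r / (LINT s:I|M. w s)))) S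
       = (LINT r:S \<inter> I|M. w r) / (LINT r:I|M. w r)"
proof -
  have nonneg: "0 \<le> (LINT r:J|M. w r)" if "J \<subseteq> I" for J
    unfolding set_lebesgue_integral_def
    using w(2) that by (intro integral_nonneg_AE AE_I2) (auto split: split_indicator)
  define Z where "Z = (LINT s:I|M. w s)"
  have "0 \<le> Z"
    unfolding Z_def by (rule nonneg) simp
  have SI: "set_integrable M (S \<inter> I) w"
    by (rule set_integrable_subset[OF w(1)]) (use I S in auto)
  have [measurable]: "(\<lambda>r. indicator I r * w r) \<in> borel_measurable M"
    using w(1) unfolding set_integrable_def by simp
  have "emeasure (density M (\<lambda>r. ennreal (indicator I r * w r / Z))) S
      = (\<integral>\<^sup>+ r. ennreal (indicator I r * w r / Z) * indicator S r \<partial>M)"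
    by (rule emeasure_density) (measurable, fact S)
  also have "\<dots> = (\<integral>\<^sup>+ r. ennreal (indicator (S \<inter> I) r * w r / Z) \<partial>M)"
    by (intro nn_integral_cong) (auto split: split_indicator)
  also have "\<dots> = ennreal (\<integral> r. indicator (S \<inter> I) r * w r / Z \<partial>M)"
  proof (rule nn_integral_eq_integral)
    show "integrable M (\<lambda>r. indicator (S \<inter> I) r * w r / Z)"
      using SI unfolding set_integrable_def by (intro integrable_divide) simp
    show "AE r in M. 0 \<le> indicator (S \<inter> I) r * w r / Z"
      using w(2) \<open>0 \<le> Z\<close> by (intro AE_I2) (auto split: split_indicator)
  qed
  also have "(\<integral> r. indicator (S \<inter> I) r * w r / Z \<partial>M) = (LINT r:S \<inter> I|M. w r) / Z"
    unfolding set_lebesgue_integral_def by simp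
  finally show ?thesis
    using nonneg[of "S \<inter> I"] \<open>0 \<le> Z\<close> by (simp add: measure_def Z_def)
qed

lemma set_integral_fraction_le_measure_fraction:
  fixes w :: "'a \<Rightarrow> real"
  assumes I: "I \<in> sets M" "emeasure M I < \<infinity>" and S: "S \<in> sets M"
    and w: "set_integrable M I w" "\<And>r. r \<in> I \<Longrightarrow> 0 \<le> w r"
    and below: "\<And>r. r \<in> S \<inter> I \<Longrightarrow> w r \<le> c"
    and above: "\<And>r. r \<in> I - S \<Longrightarrow> c \<le> w r"
  shows "(LINT r:S \<inter> I|M. w r) / (LINT r:I|M. w r) \<le> measure M (S \<inter> I) / measure M I"
proof -
  define A B where "A = (LINT r:S \<inter> I|M. w r)" and "B = (LINT r:I - S|M. w r)"
  define a b where "a = measure M (S \<inter> I)" and "b = measure M (I - S)"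
  have sets: "S \<inter> I \<in> sets M" "I - S \<in> sets M"
    using I S by auto
  have finite: "emeasure M (S \<inter> I) \<noteq> \<infinity>" "emeasure M (I - S) \<noteq> \<infinity>"
    using emeasure_mono[of "S \<inter> I" I M] emeasure_mono[of "I - S" I M] I by auto
  have integrable: "set_integrable M (S \<inter> I) w" "set_integrable M (I - S) w"
    using sets by (auto intro: set_integrable_subset[OF w(1)])
  have const_integrable: "set_integrable M J (\<lambda>_. c)" if "J \<in> sets M" "emeasure M J \<noteq> \<infinity>" for J
    unfolding set_integrable_def using that
    by (intro integrableI_bounded_set_indicator[where B = "\<bar>c\<bar>"]) (auto simp: less_top)
  have nonneg: "0 \<le> A" "0 \<le> B" "0 \<le> a" "0 \<le> b"
    unfolding A_def B_def a_def b_def set_lebesgue_integral_def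
    using w(2) by (auto intro!: integral_nonneg_AE AE_I2 split: split_indicator)
  have "(LINT r:I|M. w r) = (LINT r:(S \<inter> I) \<union> (I - S)|M. w r)"
    by (rule arg_cong[where f = "\<lambda>J. LINT r:J|M. w r"]) auto
  also have "\<dots> = A + B"
    unfolding A_def B_def by (rule set_integral_Un) (use integrable in auto)
  finally have total_weight: "(LINT r:I|M. w r) = A + B" .
  have "measure M I = measure M ((S \<inter> I) \<union> (I - S))"
    by (rule arg_cong[where f = "measure M"]) auto
  also have "\<dots> = a + b"
    unfolding a_def b_def using sets finite by (intro measure_Union) auto
  finally have total_measure: "measure M I = a + b" .
  have "A \<le> (LINT r:S \<inter> I|M. c)"
    unfolding A_def using integrable const_integrable sets finite below by (intro set_integral_mono) auto
  then have A_le: "A \<le> a * c"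
    unfolding a_def using sets finite by (simp add: set_integral_const)
  have "(LINT r:I - S|M. c) \<le> B"
    unfolding B_def using integrable const_integrable sets finite above by (intro set_integral_mono) auto
  then have B_ge: "b * c \<le> B"
    unfolding b_def using sets finite by (simp add: set_integral_const)
  have "A * b \<le> a * B"
  proof -
    have "A * b \<le> a * c * b" using A_le nonneg by (simp add: mult_right_mono)
    also have "\<dots> = a * (b * c)" by simp
    also have "\<dots> \<le> a * B" using B_ge nonneg by (simp add: mult_left_mono)
    finally show ?thesis .
  qed
  then have cross: "A * (a + b) \<le> a * (A + B)"
    by (simp add: algebra_simps)
  show ?thesis
    unfolding total_weight total_measure A_def[symmetric] a_def[symmetric]
  proof (cases "a + b = 0")
    case True
    then have "a = 0"
      using nonneg by linarith
    then have "A = 0"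
      using nonneg A_le by simp
    then show "A / (A + B) \<le> a / (a + b)"
      using nonneg by simp
  next
    case False
    then have "0 < a + b"
      using nonneg by linarith
    then show "A / (A + B) \<le> a / (a + b)"
      using cross nonneg by (cases "A + B = 0") (auto simp: divide_simps)
  qed
qed

theorem mainTheorem4:
  fixes N :: nat and eps :: real and x :: "nat \<Rightarrow> real" and xL xU t :: real
  assumes "N > 0" and "eps > 0" and "xL < xU"
    and "\<And>i. i < N \<Longrightarrow> x i \<in> {xL..xU}"
    and "0 < t" and "t < real N / 2"
  shows "measure (dp_median_split eps x N xL xU) {r. real (smaller_block x N xL xU r) \<le> t}
       \<le> measure (random_split xL xU) {r. real (smaller_block x N xL xU r) \<le> t}"
proof -
  define I S w where "I = {xL..xU}" and "S = {r. real (smaller_block x N xL xU r) \<le> t}"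
    and "w = med_weight eps x N xL xU"
  define c where "c = exp (eps * (2 * t - real N) / 2)"
  have [measurable]: "S \<in> sets borel"
    unfolding S_def by measurable
  have w: "set_integrable lborel I w" "\<And>r. 0 \<le> w r"
    unfolding I_def w_def using set_integrable_med_weight \<open>eps > 0\<close> by (auto simp: med_weight_def)
  have w_eq: "w r = exp (eps * (2 * real (smaller_block x N xL xU r) - real N) / 2)" for r
    unfolding w_def using assms(4) by (rule med_weight_eq_smaller_block)
  have "w r \<le> c" if "r \<in> S \<inter> I" for r
    using that \<open>eps > 0\<close> unfolding w_eq c_def S_def by (auto simp: mult_left_mono)
  moreover have "c \<le> w r" if "r \<in> I - S" for r
    using that \<open>eps > 0\<close> unfolding w_eq c_def S_def by (auto simp: mult_left_mono)
  ultimately have "(LINT r:S \<inter> I|lborel. w r) / (LINT r:I|lborel. w r)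
      \<le> measure lborel (S \<inter> I) / measure lborel I"
    using w by (intro set_integral_fraction_le_measure_fraction) (auto simp: I_def emeasure_lborel_Icc_eq)
  moreover have "measure (dp_median_split eps x N xL xU) S
      = (LINT r:S \<inter> I|lborel. w r) / (LINT r:I|lborel. w r)"
    unfolding dp_median_split_def I_def[symmetric] w_def[symmetric]
    using w by (intro measure_normalized_density) (auto simp: I_def)
  moreover have "measure (random_split xL xU) S = measure lborel (S \<inter> I) / measure lborel I"
    unfolding random_split_def I_def using \<open>xL < xU\<close> by (simp add: Int_commute)
  ultimately show ?thesis
    unfolding S_def by simp
qed

end
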